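(* Let $f$ be a germ of holomorphic self-map of $\mathbb{C}^2$ tangent to the identity at the origin, of order $k+1$, having $[v]$ as a characteristic direction of degree $s$. Let $\Psi$ be a biholomorphism of $\mathbb{C}^2$ fixing the origin and, near the origin, mapping the complex line $\mathbb{C}v$ into itself. Then $\Psi^{-1}\circ f\circ\Psi$ has $[v]$ as a characteristic direction of degree $s$.
   Context: Write $f(x)=x+\sum_{j\ge k+1}P_j(x)$ with $P_j$ homogeneous of degree $j$ and $P_{k+1}\not\equiv0$ ($k+1$ is the order). $[v]$ is a characteristic direction of a homogeneous map $Q$ if $Q(v)=\lambda v$ for some $\lambda\in\mathbb{C}$, $v\neq 0$. $[v]$ is a characteristic direction of degree $s$ (for $s\ge k+1$) if it is a characteristic direction of each of $P_{k+1},\dots,P_s$. *)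

theory Defs
  imports "HOL-Analysis.Analysis"
begin

definition holo_on :: "(complex^2 \<Rightarrow> complex^2) \<Rightarrow> (complex^2) set \<Rightarrow> bool" where
  "holo_on f U \<longleftrightarrow> open U \<and>
     (\<forall>x\<in>U. \<exists>D. (f has_derivative D) (at x) \<and> (\<forall>(c::complex) h. D (c *s h) = c *s D h))"

definition hom_part :: "(complex^2 \<Rightarrow> complex^2) \<Rightarrow> nat \<Rightarrow> complex^2 \<Rightarrow> complex^2" where
  "hom_part f j x = (\<chi> i. (deriv ^^ j) (\<lambda>t. f (t *s x) $ i) 0 / of_nat (fact j))"

definition char_dir :: "(complex^2 \<Rightarrow> complex^2) \<Rightarrow> complex^2 \<Rightarrow> bool" where
  "char_dir Q v \<longleftrightarrow> v \<noteq> 0 \<and> (\<exists>c::complex. Q v = c *s v)"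

definition tangent_id_order :: "(complex^2 \<Rightarrow> complex^2) \<Rightarrow> nat \<Rightarrow> bool" where
  "tangent_id_order f k \<longleftrightarrow> k \<ge> 1 \<and>
     (\<exists>U. 0 \<in> U \<and> holo_on f U) \<and> f 0 = 0 \<and> (f has_derivative id) (at 0) \<and>
     (\<forall>j. 2 \<le> j \<and> j \<le> k \<longrightarrow> hom_part f j = (\<lambda>x. 0)) \<and>
     hom_part f (k+1) \<noteq> (\<lambda>x. 0)"

definition char_dir_deg :: "(complex^2 \<Rightarrow> complex^2) \<Rightarrow> nat \<Rightarrow> nat \<Rightarrow> complex^2 \<Rightarrow> bool" where
  "char_dir_deg f k s v \<longleftrightarrow> (\<forall>j. k+1 \<le> j \<and> j \<le> s \<longrightarrow> char_dir (hom_part f j) v)"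

end

theory Submission
  imports Defs "HOL-Complex_Analysis.Complex_Analysis" "HOL-Library.Landau_Symbols"
begin

(* Let l = wedge v, i.e. l(x) = v1 x2 - v2 x1, so that [v] is a characteristic direction of Q
   iff l(Q v) = 0.
   The Taylor coefficients of t |-> l(f(t v)) are the numbers l(P_j v); for f tangent to the
   identity of order k+1, [v] is a characteristic direction of degree s exactly when
   l(f(t v)) = O(t^(s+1)).
   Near 0 we have Psi(t v) = mu(t) v with mu holomorphic and injective, so by the open mapping
   theorem Phi = Psi^-1 also maps a neighbourhood of 0 in Cv into Cv. Schwarz's lemma on the
   lines parallel to a transversal direction, uniformly in the base point, gives
   l(Phi(y)) = O(l(y)). Hence
   l(Phi(f(Psi(t v)))) = O(l(f(mu(t) v))) = O(mu(t)^(s+1)) = O(t^(s+1)). *)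

lemma higher_deriv_eq_0_if_bigo:
  fixes h :: "complex \<Rightarrow> complex"
  assumes hol: "h holomorphic_on S" and S: "open S" "0 \<in> S"
    and bigo: "h \<in> O[nhds 0](\<lambda>t. t ^ Suc s)" and j: "j \<le> s"
  shows "(deriv ^^ j) h 0 = 0"
proof -
  obtain c where c: "c > 0" "\<forall>\<^sub>F t in nhds 0. norm (h t) \<le> c * norm (t ^ Suc s)"
    using bigo by (rule landau_o.bigE)
  then obtain r where r: "r > 0" "\<And>t. norm t < r \<Longrightarrow> norm (h t) \<le> c * norm t ^ Suc s"
    by (auto simp: eventually_nhds_metric dist_norm norm_mult norm_power)
  obtain r' where r': "r' > 0" "ball 0 r' \<subseteq> S" using S openE by blast
  show ?thesis
  proof (cases "j = 0")
    case True
    then show ?thesis using r(1) r(2)[of 0] by simp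
  next
    case False
    have "norm ((deriv ^^ j) h 0) \<le> fact j * c * \<rho> ^ (Suc s - j)"
      if \<rho>: "0 < \<rho>" "\<rho> < min r r'" for \<rho>
    proof -
      have sub: "cball 0 \<rho> \<subseteq> S" using \<rho> r' by (auto simp: subset_iff)
      have "norm (h w) < c * \<rho> ^ Suc s" if "w \<in> ball 0 \<rho>" for w
      proof -
        have "norm (h w) \<le> c * norm w ^ Suc s" using that \<rho> r(2) by simp
        also have "\<dots> < c * \<rho> ^ Suc s"
          using that c by (intro mult_strict_left_mono power_strict_mono) auto
        finally show ?thesis .
      qed
      then have "norm ((deriv ^^ j) h 0) \<le> fact j * (c * \<rho> ^ Suc s) / \<rho> ^ j"
        using \<rho> False sub
        by (intro Cauchy_higher_deriv_bound[where y = 0] holomorphic_on_subset[OF hol]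
              continuous_on_subset[OF holomorphic_on_imp_continuous_on[OF hol]])
           (auto dest: subsetD[OF ball_subset_cball])
      also have "\<dots> = fact j * c * \<rho> ^ (Suc s - j)"
        using \<rho> j by (simp add: power_diff)
      finally show ?thesis .
    qed
    then have "\<forall>\<^sub>F \<rho> in at_right 0. norm ((deriv ^^ j) h 0) \<le> fact j * c * \<rho> ^ (Suc s - j)"
      using r r' by (auto simp: eventually_at_right_field intro: exI[of _ "min r r'"])
    moreover have "((\<lambda>\<rho>. fact j * c * \<rho> ^ (Suc s - j)) \<longlongrightarrow> 0) (at_right (0::real))"
      using j by (auto intro!: tendsto_eq_intros simp: zero_power)
    ultimately have "norm ((deriv ^^ j) h 0) \<le> 0"
      by (intro tendsto_lowerbound) auto
    then show ?thesis by simp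
  qed
qed

lemma isCont_imp_tendsto_nhds: "isCont g a \<Longrightarrow> (g \<longlongrightarrow> g a) (nhds a)"
  by (simp add: isCont_def tendsto_at_iff_tendsto_nhds)

lemma bigo_if_higher_deriv_eq_0:
  fixes h :: "complex \<Rightarrow> complex"
  assumes hol: "h holomorphic_on S" and S: "open S" "0 \<in> S"
    and zero: "\<And>j. j \<le> s \<Longrightarrow> (deriv ^^ j) h 0 = 0"
  shows "h \<in> O[nhds 0](\<lambda>t. t ^ Suc s)"
proof (cases "\<forall>n. (deriv ^^ n) h 0 = 0")
  case True
  obtain r where r: "r > 0" "ball 0 r \<subseteq> S" using S openE by blast
  then have "\<forall>\<^sub>F t in nhds 0. h t = 0"
    using holomorphic_fun_eq_0_on_ball[OF holomorphic_on_subset[OF hol r(2)] _ True[rule_format]]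
    by (auto simp: eventually_nhds_metric dist_commute intro!: exI[of _ r])
  then show ?thesis by (auto intro!: bigoI[where c = 0] elim: eventually_mono)
next
  case False
  define n where "n = (LEAST n. (deriv ^^ n) h 0 \<noteq> 0)"
  have dn: "(deriv ^^ n) h 0 \<noteq> 0"
    unfolding n_def using False by (metis (mono_tags, lifting) LeastI)
  have below_n: "\<And>i. i < n \<Longrightarrow> (deriv ^^ i) h 0 = 0"
    unfolding n_def using not_less_Least by blast
  have sn: "s < n" using zero dn by (meson not_le)
  obtain g r where r: "0 < r" "g holomorphic_on ball 0 r"
    and factor: "\<And>w. w \<in> ball 0 r \<Longrightarrow> h w - h 0 = (w - 0) ^ n * g w"
    by (rule holomorphic_factor_order_of_zero[OF hol S(1) S(2) _ dn]) (use below_n sn in auto)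
  define q where "q t = t ^ (n - Suc s) * g t" for t
  have "t ^ n = t ^ Suc s * t ^ (n - Suc s)" for t :: complex
    using sn by (metis le_add_diff_inverse less_eq_Suc_le power_add)
  then have "\<forall>\<^sub>F t in nhds 0. h t = t ^ Suc s * q t"
    using r factor zero[of 0]
    by (auto simp: eventually_nhds_metric dist_commute q_def intro!: exI[of _ r])
  moreover have "q \<in> O[nhds 0](\<lambda>_. 1)"
  proof (rule bigoI_tendsto)
    have "isCont q 0" unfolding q_def
      using r by (intro continuous_intros holomorphic_on_imp_continuous_on[THEN continuous_on_interior]) auto
    then show "((\<lambda>t. q t / 1) \<longlongrightarrow> q 0) (nhds 0)"
      by (simp add: isCont_imp_tendsto_nhds)
  qed simp
  then have "(\<lambda>t. t ^ Suc s * q t) \<in> O[nhds 0](\<lambda>t. t ^ Suc s * 1)"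
    by (rule landau_o.big.mult_left)
  ultimately show ?thesis by (simp add: landau_o.big.in_cong)
qed

lemma bigo_compose_holomorphic_zero:
  fixes h \<mu> :: "complex \<Rightarrow> complex"
  assumes h: "h \<in> O[nhds 0](\<lambda>c. c ^ n)"
    and \<mu>: "\<mu> holomorphic_on S" "open S" "0 \<in> S" "\<mu> 0 = 0"
  shows "(\<lambda>t. h (\<mu> t)) \<in> O[nhds 0](\<lambda>t. t ^ n)"
proof -
  have cont: "isCont \<mu> 0"
    using \<mu> by (intro continuous_on_interior[OF holomorphic_on_imp_continuous_on]) (auto simp: interior_open)
  have "filterlim \<mu> (nhds 0) (nhds 0)"
    using isCont_imp_tendsto_nhds[OF cont] \<mu>(4) by simp
  with h have "(\<lambda>t. h (\<mu> t)) \<in> O[nhds 0](\<lambda>t. \<mu> t ^ n)"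
    by (rule landau_o.big.compose)
  also have "\<mu> \<in> O[nhds 0](\<lambda>t. t ^ Suc 0)"
    using \<mu> by (intro bigo_if_higher_deriv_eq_0) auto
  then have "(\<lambda>t. \<mu> t ^ n) \<in> O[nhds 0](\<lambda>t. t ^ n)"
    using landau_o.big_power by simp
  finally show ?thesis .
qed

lemma Schwarz_Lemma_ball:
  fixes f :: "complex \<Rightarrow> complex"
  assumes hol: "f holomorphic_on ball 0 r" and f0: "f 0 = 0"
    and bound: "\<And>z. norm z < r \<Longrightarrow> norm (f z) \<le> M" and z: "norm z < r"
  shows "norm (f z) \<le> M / r * norm z"
proof -
  have r: "r > 0" using z norm_ge_zero[of z] by linarith
  (* Schwarz_Lemma needs a strict bound, so we use every M' > M and let M' tend to M. *)
  have "norm (f z) \<le> M' / r * norm z" if M': "M' > M" for M'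
  proof -
    have "M \<ge> 0" using bound[of 0] r f0 by simp
    then have "M' > 0" using M' by linarith
    define F where "F \<xi> = f (of_real r * \<xi>) / of_real M'" for \<xi>
    have scale: "norm (of_real r * \<xi>) < r" if "norm \<xi> < 1" for \<xi> :: complex
      using that r by (simp add: norm_mult)
    have "F holomorphic_on ball 0 1" unfolding F_def
      using scale by (intro holomorphic_intros holomorphic_on_compose_gen[OF _ hol, unfolded o_def]) auto
    moreover have "F 0 = 0" unfolding F_def using f0 by simp
    moreover have "norm (F \<xi>) < 1" if "norm \<xi> < 1" for \<xi>
      using bound[OF scale[OF that]] M' \<open>M' > 0\<close> by (simp add: F_def norm_divide)
    moreover have "norm (z / of_real r) < 1" using z r by (simp add: norm_divide)
    ultimately have "norm (F (z / of_real r)) \<le> norm (z / of_real r)" by (rule Schwarz_Lemma(1))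
    then show ?thesis using r \<open>M' > 0\<close> by (simp add: F_def norm_divide field_simps)
  qed
  then have "\<forall>\<^sub>F M' in at_right M. norm (f z) \<le> M' / r * norm z"
    by (auto simp: eventually_at_right_field intro: exI[of _ "M + 1"])
  moreover have "((\<lambda>M'. M' / r * norm z) \<longlongrightarrow> M / r * norm z) (at_right M)"
    using r by (intro tendsto_intros) auto
  ultimately show ?thesis by (intro tendsto_lowerbound) auto
qed

lemma norm_vector_smult: "norm (c *s (x::complex^'n)) = norm c * norm x"
proof -
  have "norm (c *s x) = L2_set (\<lambda>i. norm c * norm (x$i)) UNIV"
    unfolding norm_vec_def by (simp add: norm_mult)
  also have "\<dots> = norm c * L2_set (\<lambda>i. norm (x$i)) UNIV"
    by (simp add: L2_set_right_distrib)
  finally show ?thesis unfolding norm_vec_def .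
qed

lemma holo_on_imp_continuous_on: "holo_on F S \<Longrightarrow> continuous_on S F"
  unfolding holo_on_def
  by (metis continuous_at_imp_continuous_on has_derivative_continuous)

lemma holo_on_compose:
  assumes F: "holo_on F S" and G: "holo_on G T"
  shows "holo_on (\<lambda>x. G (F x)) (S \<inter> F -` T)"
  unfolding holo_on_def
proof safe
  show "open (S \<inter> F -` T)"
    using F G by (intro continuous_open_preimage holo_on_imp_continuous_on) (auto simp: holo_on_def)
next
  fix x assume "x \<in> S" "F x \<in> T"
  then obtain D E where D: "(F has_derivative D) (at x)" "\<forall>c h. D (c *s h) = c *s D h"
    and E: "(G has_derivative E) (at (F x))" "\<forall>c h. E (c *s h) = c *s E h"
    using F G unfolding holo_on_def by blast
  then show "\<exists>D. ((\<lambda>x. G (F x)) has_derivative D) (at x) \<and> (\<forall>c h. D (c *s h) = c *s D h)"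
    using diff_chain_at[OF D(1) E(1)] by (intro exI[of _ "\<lambda>h. E (D h)"]) (simp add: o_def)
qed

lemma has_derivative_line:
  fixes p u :: "complex^2"
  shows "((\<lambda>z. p + z *s u) has_derivative (\<lambda>z. z *s u)) (at t)"
proof -
  have "linear (\<lambda>z::complex. z *s u)"
    by (rule linearI) (simp_all add: vec_eq_iff algebra_simps)
  then have "bounded_linear (\<lambda>z::complex. z *s u)"
    by (simp add: linear_conv_bounded_linear)
  then have "((\<lambda>z::complex. z *s u) has_derivative (\<lambda>z. z *s u)) (at t)"
    by (rule bounded_linear_imp_has_derivative)
  then show ?thesis
    by (rule has_derivative_add[OF has_derivative_const, simplified])
qed

lemma has_field_derivative_line_component:
  fixes F :: "complex^2 \<Rightarrow> complex^2"
  assumes "(F has_derivative D) (at (p + t *s u))" "\<And>c h. D (c *s h) = c *s D h"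
  shows "((\<lambda>z. F (p + z *s u) $ i) has_field_derivative D u $ i) (at t)"
proof -
  have "((\<lambda>z. F (p + z *s u)) has_derivative (\<lambda>z. z *s D u)) (at t)"
    using diff_chain_at[OF has_derivative_line assms(1)] assms(2) by (simp add: o_def)
  then have "((\<lambda>z. F (p + z *s u) $ i) has_derivative (\<lambda>z. (z *s D u) $ i)) (at t)"
    by (rule bounded_linear.has_derivative[OF bounded_linear_vec_nth])
  moreover have "(\<lambda>z. (z *s D u) $ i) = (*) (D u $ i)" by (auto simp: mult.commute)
  ultimately show ?thesis unfolding has_field_derivative_def by simp
qed

lemma open_line_preimage:
  fixes p u :: "complex^2"
  assumes "open S" shows "open {z. p + z *s u \<in> S}"
proof -
  have "open ((\<lambda>z. p + z *s u) -` S)"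
    using assms by (intro continuous_open_vimage has_derivative_continuous[OF has_derivative_line])
  then show ?thesis by (simp add: vimage_def)
qed

lemma open_line_through_0:
  assumes "holo_on F S" "0 \<in> S"
  shows "open {t. t *s v \<in> S}" "0 \<in> {t. t *s v \<in> S}"
  using assms open_line_preimage[of S 0 v] by (auto simp: holo_on_def)

lemma holomorphic_on_line_component:
  fixes F :: "complex^2 \<Rightarrow> complex^2"
  assumes "holo_on F S"
  shows "(\<lambda>z. F (p + z *s u) $ i) holomorphic_on {z. p + z *s u \<in> S}"
proof -
  have "open S" using assms by (simp add: holo_on_def)
  show ?thesis
    unfolding holomorphic_on_open[OF open_line_preimage[OF \<open>open S\<close>]]
  proof
    fix t assume "t \<in> {z. p + z *s u \<in> S}"
    then obtain D where "(F has_derivative D) (at (p + t *s u))" "\<forall>c h. D (c *s h) = c *s D h"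
      using assms unfolding holo_on_def by blast
    then show "\<exists>d. ((\<lambda>z. F (p + z *s u) $ i) has_field_derivative d) (at t)"
      using has_field_derivative_line_component by blast
  qed
qed

definition wedge :: "complex^2 \<Rightarrow> complex^2 \<Rightarrow> complex" where
  "wedge v x = v$1 * x$2 - v$2 * x$1"

lemma wedge_eq_0_iff:
  assumes "v \<noteq> 0" shows "wedge v x = 0 \<longleftrightarrow> (\<exists>c. x = c *s v)"
proof
  assume x: "wedge v x = 0"
  show "\<exists>c. x = c *s v"
  proof (cases "v$1 = 0")
    case True
    then have "v$2 \<noteq> 0" using assms by (metis exhaust_2 vec_eq_iff zero_index)
    then show ?thesis using x True unfolding wedge_def
      by (intro exI[of _ "x$2 / v$2"]) (auto simp: vec_eq_iff forall_2 field_simps)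
  next
    case False
    then show ?thesis using x unfolding wedge_def
      by (intro exI[of _ "x$1 / v$1"]) (auto simp: vec_eq_iff forall_2 field_simps)
  qed
qed (auto simp: wedge_def)

lemma char_dir_iff_wedge: "char_dir Q v \<longleftrightarrow> v \<noteq> 0 \<and> wedge v (Q v) = 0"
  unfolding char_dir_def using wedge_eq_0_iff by blast

lemma wedge_eq_1_exists:
  assumes "v \<noteq> 0" shows "\<exists>w. wedge v w = 1"
proof (cases "v$1 = 0")
  case True
  then have "v$2 \<noteq> 0" using assms by (metis exhaust_2 vec_eq_iff zero_index)
  then show ?thesis using True by (intro exI[of _ "axis 1 (- 1 / v$2)"]) (simp add: wedge_def axis_def)
next
  case False
  then show ?thesis by (intro exI[of _ "axis 2 (1 / v$1)"]) (simp add: wedge_def axis_def)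
qed

lemma wedge_decompose: "wedge v w = 1 \<Longrightarrow> x = wedge x w *s v + wedge v x *s w"
  unfolding wedge_def by (simp add: vec_eq_iff forall_2; algebra)

lemma tendsto_wedge [tendsto_intros]:
  "(f \<longlongrightarrow> a) F \<Longrightarrow> (g \<longlongrightarrow> b) F \<Longrightarrow> ((\<lambda>x. wedge (f x) (g x)) \<longlongrightarrow> wedge a b) F"
  unfolding wedge_def by (intro tendsto_intros tendsto_vec_nth)

lemma continuous_on_wedge [continuous_intros]:
  "continuous_on S f \<Longrightarrow> continuous_on S g \<Longrightarrow> continuous_on S (\<lambda>x. wedge (f x) (g x))"
  unfolding continuous_on_def by (auto intro: tendsto_wedge)

lemma holomorphic_on_wedge_line:
  assumes "holo_on F S"
  shows "(\<lambda>z. wedge v (F (p + z *s u))) holomorphic_on {z. p + z *s u \<in> S}"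
  unfolding wedge_def using holomorphic_on_line_component[OF assms] by (intro holomorphic_intros)

lemma higher_deriv_wedge_line:
  assumes hol: "holo_on F S" and "0 \<in> S"
  shows "(deriv ^^ j) (\<lambda>t. wedge v (F (t *s v))) 0 = fact j * wedge v (hom_part F j v)"
proof -
  note L = open_line_through_0[OF assms, of v]
  have comp: "(\<lambda>t. F (t *s v) $ i) holomorphic_on {t. t *s v \<in> S}" for i
    using holomorphic_on_line_component[OF hol, of 0 v i] by simp
  have "(deriv ^^ j) (\<lambda>t. wedge v (F (t *s v))) 0
      = (deriv ^^ j) (\<lambda>t. v$1 * F (t *s v) $ 2) 0 - (deriv ^^ j) (\<lambda>t. v$2 * F (t *s v) $ 1) 0"
    unfolding wedge_def using L comp by (intro higher_deriv_diff holomorphic_intros)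
  also have "\<dots> = v$1 * (deriv ^^ j) (\<lambda>t. F (t *s v) $ 2) 0 - v$2 * (deriv ^^ j) (\<lambda>t. F (t *s v) $ 1) 0"
    by (simp add: higher_deriv_cmult[OF comp L(2) L(1)])
  also have "\<dots> = fact j * wedge v (hom_part F j v)"
    unfolding wedge_def hom_part_def by (simp add: field_simps)
  finally show ?thesis .
qed

lemma bigo_wedge_line_iff:
  assumes hol: "holo_on F S" and "0 \<in> S"
  shows "(\<lambda>t. wedge v (F (t *s v))) \<in> O[nhds 0](\<lambda>t. t ^ Suc s)
    \<longleftrightarrow> (\<forall>j\<le>s. wedge v (hom_part F j v) = 0)"
proof -
  note L = open_line_through_0[OF assms, of v]
  have h: "(\<lambda>t. wedge v (F (t *s v))) holomorphic_on {t. t *s v \<in> S}"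
    using holomorphic_on_wedge_line[OF hol, of v 0 v] by simp
  have "(deriv ^^ j) (\<lambda>t. wedge v (F (t *s v))) 0 = 0 \<longleftrightarrow> wedge v (hom_part F j v) = 0" for j
    by (simp add: higher_deriv_wedge_line[OF assms])
  then show ?thesis
    using higher_deriv_eq_0_if_bigo[OF h L(1,2)] bigo_if_higher_deriv_eq_0[OF h L(1,2)] by blast
qed

lemma wedge_hom_part_tangent_id:
  assumes f: "tangent_id_order f k" and j: "j \<le> k"
  shows "wedge v (hom_part f j v) = 0"
proof -
  consider "j = 0" | "j = 1" | "2 \<le> j" using not_less_eq_eq by fastforce
  then show ?thesis
  proof cases
    case 1
    then show ?thesis using f by (simp add: tangent_id_order_def hom_part_def wedge_def)
  next
    case 2
    have "(f has_derivative id) (at (0 + 0 *s v))" using f by (simp add: tangent_id_order_def)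
    then have "((\<lambda>t. f (0 + t *s v) $ i) has_field_derivative id v $ i) (at 0)" for i
      by (rule has_field_derivative_line_component) simp
    then have "hom_part f 1 v = v"
      unfolding hom_part_def by (simp add: vec_eq_iff DERIV_imp_deriv)
    then show ?thesis using 2 by (simp add: wedge_def mult.commute)
  next
    case 3
    then show ?thesis using f j by (simp add: tangent_id_order_def wedge_def)
  qed
qed

lemma wedge_hom_part_char_dir_deg:
  assumes "tangent_id_order f k" "char_dir_deg f k s v" "j \<le> s"
  shows "wedge v (hom_part f j v) = 0"
  using assms wedge_hom_part_tangent_id[OF assms(1)]
  by (cases "j \<le> k") (auto simp: char_dir_deg_def char_dir_iff_wedge)

lemma bigo_wedge_if_preserves_line:
  fixes \<Phi> :: "complex^2 \<Rightarrow> complex^2"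
  assumes hol: "holo_on \<Phi> W" and W: "0 \<in> W" and v: "v \<noteq> 0"
    and line: "\<forall>\<^sub>F c in nhds 0. wedge v (\<Phi> (c *s v)) = 0"
  shows "(\<lambda>y. wedge v (\<Phi> y)) \<in> O[nhds 0](wedge v)"
proof -
  obtain w where w: "wedge v w = 1" using wedge_eq_1_exists[OF v] by blast
  then have "w \<noteq> 0" by (auto simp: wedge_def)
  obtain R where R: "R > 0" "cball 0 R \<subseteq> W"
    using hol W by (auto simp: holo_on_def open_contains_cball)
  have "compact ((\<lambda>x. wedge v (\<Phi> x)) ` cball 0 R)"
    using R by (intro compact_continuous_image continuous_intros
        continuous_on_subset[OF holo_on_imp_continuous_on[OF hol]]) auto
  then obtain M where M: "\<And>x. x \<in> cball 0 R \<Longrightarrow> norm (wedge v (\<Phi> x)) \<le> M"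
    by (meson bounded_iff compact_imp_bounded imageI)
  (* With y = a v + b w, b = wedge v y, the function z |-> wedge v (Phi (a v + z w)) vanishes at 0
     and is bounded by M on the disc of radius r, uniformly in the small parameter a; Schwarz's
     lemma then bounds its value at z = b by (M / r) |b|. *)
  define r where "r = R / (2 * norm w)"
  have r: "r > 0" using R \<open>w \<noteq> 0\<close> by (simp add: r_def)
  have "((\<lambda>y. wedge y w) \<longlongrightarrow> wedge 0 w) (nhds 0)" "((\<lambda>y. wedge v y) \<longlongrightarrow> wedge v 0) (nhds 0)"
    by (intro tendsto_wedge filterlim_ident tendsto_const)+
  then have to_0: "((\<lambda>y. wedge y w) \<longlongrightarrow> 0) (nhds 0)" "((\<lambda>y. wedge v y) \<longlongrightarrow> 0) (nhds 0)"
    by (simp_all add: wedge_def)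
  have "\<forall>\<^sub>F y in nhds 0. wedge v (\<Phi> (wedge y w *s v)) = 0 \<and> norm (wedge y w) * norm v < R / 2
      \<and> norm (wedge v y) < r"
  proof (intro eventually_conj)
    show "\<forall>\<^sub>F y in nhds 0. wedge v (\<Phi> (wedge y w *s v)) = 0"
      using line to_0(1) by (rule eventually_compose_filterlim)
    show "\<forall>\<^sub>F y in nhds 0. norm (wedge y w) * norm v < R / 2"
      using R by (intro order_tendstoD(2)[OF tendsto_mult_left_zero[OF tendsto_norm_zero[OF to_0(1)]]]) auto
    show "\<forall>\<^sub>F y in nhds 0. norm (wedge v y) < r"
      using r by (intro order_tendstoD(2)[OF tendsto_norm_zero[OF to_0(2)]])
  qed
  then have "\<forall>\<^sub>F y in nhds 0. norm (wedge v (\<Phi> y)) \<le> M / r * norm (wedge v y)"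
  proof eventually_elim
    case (elim y)
    define p where "p = wedge y w *s v"
    define \<psi> where "\<psi> z = wedge v (\<Phi> (p + z *s w))" for z
    have near: "p + z *s w \<in> cball 0 R" if "norm z < r" for z
    proof -
      have "norm (p + z *s w) \<le> norm p + norm z * norm w"
        using norm_triangle_ineq[of p "z *s w"] by (simp add: norm_vector_smult)
      also have "\<dots> \<le> R / 2 + r * norm w"
        using elim that by (intro add_mono mult_right_mono) (auto simp: p_def norm_vector_smult)
      also have "\<dots> = R" using \<open>w \<noteq> 0\<close> by (simp add: r_def)
      finally show ?thesis by simp
    qed
    have "\<psi> holomorphic_on ball 0 r"
      unfolding \<psi>_def using near R(2)
      by (intro holomorphic_on_subset[OF holomorphic_on_wedge_line[OF hol]]) auto
    moreover have "\<psi> 0 = 0" using elim by (simp add: \<psi>_def p_def)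
    moreover have "norm (\<psi> z) \<le> M" if "norm z < r" for z
      unfolding \<psi>_def using M near that by blast
    ultimately have "norm (\<psi> (wedge v y)) \<le> M / r * norm (wedge v y)"
      using elim by (intro Schwarz_Lemma_ball) auto
    moreover have "\<psi> (wedge v y) = wedge v (\<Phi> y)"
      using wedge_decompose[OF w, of y] by (simp add: \<psi>_def p_def)
    ultimately show ?case by simp
  qed
  then show ?thesis by (rule bigoI)
qed

lemma bigo_wedge_compose_line:
  fixes \<Phi> F :: "complex^2 \<Rightarrow> complex^2"
  assumes \<Phi>: "(\<lambda>y. wedge v (\<Phi> y)) \<in> O[nhds 0](wedge v)"
    and F: "(\<lambda>c. wedge v (F (c *s v))) \<in> O[nhds 0](\<lambda>c. c ^ n)" "isCont F 0" "F 0 = 0"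
  shows "(\<lambda>c. wedge v (\<Phi> (F (c *s v)))) \<in> O[nhds 0](\<lambda>c. c ^ n)"
proof -
  have cont: "isCont (\<lambda>c. F (c *s v)) 0"
    using isCont_o2[OF has_derivative_continuous[OF has_derivative_line[of 0 v 0]], of F] F(2) by simp
  have "filterlim (\<lambda>c. F (c *s v)) (nhds 0) (nhds 0)"
    using isCont_imp_tendsto_nhds[OF cont] F(3) by simp
  with \<Phi> have "(\<lambda>c. wedge v (\<Phi> (F (c *s v)))) \<in> O[nhds 0](\<lambda>c. wedge v (F (c *s v)))"
    by (rule landau_o.big.compose)
  also note F(1)
  finally show ?thesis .
qed

lemma line_coordinate:
  fixes \<Psi> :: "complex^2 \<Rightarrow> complex^2"
  assumes hol: "holo_on \<Psi> V" and inj: "inj_on \<Psi> V" and "0 \<in> V" and v: "v \<noteq> 0"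
    and line: "\<exists>\<epsilon>>0. \<forall>t::complex. norm (t *s v) < \<epsilon> \<longrightarrow> (\<exists>\<mu>::complex. \<Psi> (t *s v) = \<mu> *s v)"
  obtains \<mu> S where "open S" "0 \<in> S" "\<mu> holomorphic_on S" "inj_on \<mu> S"
    "\<And>t. t \<in> S \<Longrightarrow> t *s v \<in> V \<and> \<Psi> (t *s v) = \<mu> t *s v"
proof -
  obtain \<epsilon> where \<epsilon>: "\<epsilon> > 0" "\<And>t. norm (t *s v) < \<epsilon> \<Longrightarrow> \<exists>\<mu>. \<Psi> (t *s v) = \<mu> *s v"
    using line by blast
  obtain i where i: "v $ i \<noteq> 0" using v by (metis vec_eq_iff zero_index)
  define \<mu> where "\<mu> t = \<Psi> (t *s v) $ i / v $ i" for t
  define S where "S = {t. t *s v \<in> V} \<inter> ball 0 (\<epsilon> / norm v)"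
  have "open S" "0 \<in> S"
    using open_line_through_0[OF hol \<open>0 \<in> V\<close>, of v] \<epsilon> v by (auto simp: S_def)
  moreover have "\<mu> holomorphic_on S"
    unfolding \<mu>_def S_def using holomorphic_on_line_component[OF hol, of 0 v i]
    by (intro holomorphic_intros) (auto elim: holomorphic_on_subset)
  moreover have on_line: "t *s v \<in> V \<and> \<Psi> (t *s v) = \<mu> t *s v" if "t \<in> S" for t
  proof -
    have "norm (t *s v) < \<epsilon>" using that v by (simp add: S_def norm_vector_smult field_simps)
    then obtain m where "\<Psi> (t *s v) = m *s v" using \<epsilon>(2) by blast
    then show ?thesis using that i by (simp add: S_def \<mu>_def)
  qed
  moreover have "inj_on \<mu> S"
  proof
    fix t t' assume "t \<in> S" "t' \<in> S" "\<mu> t = \<mu> t'"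
    then have "\<Psi> (t *s v) = \<Psi> (t' *s v)" "t *s v \<in> V" "t' *s v \<in> V" using on_line by metis+
    then show "t = t'" using inj v by (simp add: inj_on_eq_iff)
  qed
  ultimately show ?thesis using that by blast
qed

lemma inv_into_preserves_line:
  fixes \<Psi> :: "complex^2 \<Rightarrow> complex^2"
  assumes inj: "inj_on \<Psi> V" and S: "open S" "0 \<in> S" and \<mu>: "\<mu> holomorphic_on S" "inj_on \<mu> S"
    and on_line: "\<And>t. t \<in> S \<Longrightarrow> t *s v \<in> V \<and> \<Psi> (t *s v) = \<mu> t *s v"
  shows "\<forall>\<^sub>F c in nhds (\<mu> 0). \<exists>t. inv_into V \<Psi> (c *s v) = t *s v"
proof -
  have "open (\<mu> ` S)" using open_mapping_thm3[OF \<mu>(1) S(1) \<mu>(2)] .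
  then have "\<forall>\<^sub>F c in nhds (\<mu> 0). c \<in> \<mu> ` S" using S(2) by (intro eventually_nhds_in_open) auto
  then show ?thesis
  proof eventually_elim
    case (elim c)
    then obtain t where "t \<in> S" "c = \<mu> t" by blast
    then show ?case using on_line inj by (metis inv_into_f_f)
  qed
qed

theorem lemma2p2:
  fixes f \<Psi> :: "complex^2 \<Rightarrow> complex^2" and k s :: nat and v :: "complex^2" and V :: "(complex^2) set"
  assumes "tangent_id_order f k"
    and "s \<ge> k + 1"
    and "char_dir_deg f k s v"
    and "0 \<in> V" and "holo_on \<Psi> V" and "inj_on \<Psi> V" and "open (\<Psi> ` V)"
    and "holo_on (inv_into V \<Psi>) (\<Psi> ` V)"
    and "\<Psi> 0 = 0"
    and "\<exists>\<epsilon>>0. \<forall>t::complex. norm (t *s v) < \<epsilon> \<longrightarrow> (\<exists>\<mu>::complex. \<Psi> (t *s v) = \<mu> *s v)"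
  shows "char_dir_deg (\<lambda>x. inv_into V \<Psi> (f (\<Psi> x))) k s v"
proof -
  define \<Phi> where "\<Phi> = inv_into V \<Psi>"
  have v: "v \<noteq> 0" using assms(2,3) by (auto simp: char_dir_deg_def char_dir_def)
  obtain U where U: "0 \<in> U" "holo_on f U" and f: "f 0 = 0" "isCont f 0"
    using assms(1) by (auto simp: tangent_id_order_def has_derivative_continuous)
  obtain S \<mu> where S: "open S" "0 \<in> S" and \<mu>: "\<mu> holomorphic_on S" "inj_on \<mu> S"
    and on_line: "\<And>t. t \<in> S \<Longrightarrow> t *s v \<in> V \<and> \<Psi> (t *s v) = \<mu> t *s v"
    using line_coordinate[OF assms(5,6,4) v assms(10)] by metis
  have \<mu>0: "\<mu> 0 = 0" using on_line[OF S(2)] assms(9) v by simp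
  have "\<forall>\<^sub>F c in nhds 0. wedge v (\<Phi> (c *s v)) = 0"
    using inv_into_preserves_line[OF assms(6) S \<mu> on_line] \<mu>0 v
    by (auto simp: \<Phi>_def wedge_eq_0_iff elim: eventually_mono)
  then have \<Phi>_bigo: "(\<lambda>y. wedge v (\<Phi> y)) \<in> O[nhds 0](wedge v)"
    using assms(4,8,9) v by (intro bigo_wedge_if_preserves_line[of \<Phi> "\<Psi> ` V"]) (auto simp: \<Phi>_def)
  have "(\<lambda>c. wedge v (f (c *s v))) \<in> O[nhds 0](\<lambda>c. c ^ Suc s)"
    using bigo_wedge_line_iff[OF U(2,1)] wedge_hom_part_char_dir_deg[OF assms(1,3)] by blast
  then have "(\<lambda>c. wedge v (\<Phi> (f (c *s v)))) \<in> O[nhds 0](\<lambda>c. c ^ Suc s)"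
    by (rule bigo_wedge_compose_line[OF \<Phi>_bigo _ f(2,1)])
  then have "(\<lambda>t. wedge v (\<Phi> (f (\<mu> t *s v)))) \<in> O[nhds 0](\<lambda>t. t ^ Suc s)"
    using \<mu>(1) S \<mu>0 by (rule bigo_compose_holomorphic_zero)
  moreover have "\<forall>\<^sub>F t in nhds 0. wedge v (\<Phi> (f (\<Psi> (t *s v)))) = wedge v (\<Phi> (f (\<mu> t *s v)))"
    using eventually_nhds_in_open[OF S] by (rule eventually_mono) (simp add: on_line)
  ultimately have g_bigo: "(\<lambda>t. wedge v (\<Phi> (f (\<Psi> (t *s v))))) \<in> O[nhds 0](\<lambda>t. t ^ Suc s)"
    by (simp add: landau_o.big.in_cong)
  have "holo_on (\<lambda>x. \<Phi> (f (\<Psi> x))) (V \<inter> \<Psi> -` (U \<inter> f -` (\<Psi> ` V)))"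
    using assms(5,8) U(2) unfolding \<Phi>_def by (intro holo_on_compose)
  moreover have "0 \<in> V \<inter> \<Psi> -` (U \<inter> f -` (\<Psi> ` V))" using assms(4,9) U(1) f(1) by auto
  ultimately have "\<forall>j\<le>s. wedge v (hom_part (\<lambda>x. \<Phi> (f (\<Psi> x))) j v) = 0"
    using bigo_wedge_line_iff g_bigo by blast
  then show ?thesis using v by (simp add: char_dir_deg_def char_dir_iff_wedge \<Phi>_def)
qed

end
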